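(* Let $n\ge1$ and let $c:E_n\to\mathbb C$ be an admissible edge weighting of $Q_n$ with $c(ij)\ne0$ for all $ij\in E_n$. Then there is $\mathbf t\in\Delta_{n-1}$ such that the representation $\rho_c$ is unitarily equivalent to $\rho_{\mathbf t}$.
   Context: For $n\ge1$, identify integers $0\le i<2^n$ with their $n$-digit binary representations $i=\sum_k i_k2^k$; $\mathrm{par}_k(i)=\sum_{r=0}^k i_r\bmod2$, and $i\#k$ is $i$ with its $k$-th digit flipped. The hypercube $Q_n$ has vertex classes $U_n=\{i\mid\mathrm{par}_{n-1}(i)=0\}$, $V_n=\{j\mid\mathrm{par}_{n-1}(j)=1\}$ and edge set $E_n$ of pairs $ij$ ($i\in U_n$, $j\in V_n$, $j=i\#k$ for some $k<n$); $\mathcal N(x)$ denotes neighbors. $C^\ast(Q_n)$ is the universal unital C*-algebra generated by projections $p_x$ with $\sum_{u\in U_n}p_u=1=\sum_{v\in V_n}p_v$ and $p_up_v=0$ for non-adjacent $u,v$. A weighting $c:E_n\to\mathbb C$ (with $c(ij):=0$ for non-adjacent $i,j$) is admissible if $\sum_{i\in\mathcal N(j_1)\cap\mathcal N(j_2)}c(ij_1)\overline{c(ij_2)}=\delta_{j_1j_2}$ for all $j_1,j_2\in V_n(c)$ and $\sum_{j\in\mathcal N(i_1)\cap\mathcal N(i_2)}c(i_1j)\overline{c(i_2j)}=\delta_{i_1i_2}$ for all $i_1,i_2\in U_n(c)$, where $U_n(c),V_n(c)$ are the vertices incident to some edge of nonzero weight. For such $c$, $\rho_c:C^\ast(Q_n)\to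 M_{U_n(c)}$ is the representation with $\rho_c(p_i)=E_{ii}$ ($i\in U_n(c)$), $\rho_c(p_j)=[c(i_1j)\overline{c(i_2j)}]_{i_1,i_2\in U_n(c)}$ ($j\in V_n(c)$), $\rho_c(p_x)=0$ otherwise. $\Delta_{n-1}=\{[t_0,\dots,t_{n-1}]\mid t_k\ge0,\sum t_k=1\}$; for $\mathbf t\in\Delta_{n-1}$, $c_{\mathbf t}(ij)=(-1)^{\mathrm{par}_k(i)}\sqrt{t_k}$ for $i\in U_n$, $j=i\#k$, and $\rho_{\mathbf t}:C^\ast(Q_n)\to M_{U_n}$ is the representation with $\rho_{\mathbf t}(p_i)=E_{ii}$, $\rho_{\mathbf t}(p_j)=[c_{\mathbf t}(i_1j)\overline{c_{\mathbf t}(i_2j)}]_{i_1,i_2\in U_n}$. *)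

theory Defs
  imports Complex_Main
begin

text \<open>Binary digits: i_k is bit i k. par k i = (sum_{r<=k} i_r) mod 2.
  i # k is flip_bit k i.\<close>

definition par :: "nat \<Rightarrow> nat \<Rightarrow> nat" where
  "par k i = (\<Sum>r\<le>k. if bit i r then 1 else 0) mod 2"

definition Uset :: "nat \<Rightarrow> nat set" where
  "Uset n = {i. i < 2 ^ n \<and> par (n - 1) i = 0}"

definition Vset :: "nat \<Rightarrow> nat set" where
  "Vset n = {j. j < 2 ^ n \<and> par (n - 1) j = 1}"

definition edge :: "nat \<Rightarrow> nat \<Rightarrow> nat \<Rightarrow> bool" where
  "edge n i j \<longleftrightarrow> i \<in> Uset n \<and> j \<in> Vset n \<and> (\<exists>k<n. j = flip_bit k i)"

definition nbrs :: "nat \<Rightarrow> nat \<Rightarrow> nat set" where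
  "nbrs n x = {y. edge n x y \<or> edge n y x}"

definition cw :: "nat \<Rightarrow> (nat \<Rightarrow> nat \<Rightarrow> complex) \<Rightarrow> nat \<Rightarrow> nat \<Rightarrow> complex" where
  "cw n c i j = (if edge n i j then c i j else 0)"

definition Uc :: "nat \<Rightarrow> (nat \<Rightarrow> nat \<Rightarrow> complex) \<Rightarrow> nat set" where
  "Uc n c = {i \<in> Uset n. \<exists>j. edge n i j \<and> c i j \<noteq> 0}"

definition Vc :: "nat \<Rightarrow> (nat \<Rightarrow> nat \<Rightarrow> complex) \<Rightarrow> nat set" where
  "Vc n c = {j \<in> Vset n. \<exists>i. edge n i j \<and> c i j \<noteq> 0}"

definition admissible :: "nat \<Rightarrow> (nat \<Rightarrow> nat \<Rightarrow> complex) \<Rightarrow> bool" where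
  "admissible n c \<longleftrightarrow>
     (\<forall>j1\<in>Vc n c. \<forall>j2\<in>Vc n c.
        (\<Sum>i\<in>nbrs n j1 \<inter> nbrs n j2. cw n c i j1 * cnj (cw n c i j2))
          = (if j1 = j2 then 1 else 0)) \<and>
     (\<forall>i1\<in>Uc n c. \<forall>i2\<in>Uc n c.
        (\<Sum>j\<in>nbrs n i1 \<inter> nbrs n i2. cw n c i1 j * cnj (cw n c i2 j))
          = (if i1 = i2 then 1 else 0))"

text \<open>Matrices are functions nat => nat => complex, meaningful on an index set.
  rho_c(p_x) as a matrix indexed by U_n(c) x U_n(c).\<close>
definition rho_c :: "nat \<Rightarrow> (nat \<Rightarrow> nat \<Rightarrow> complex) \<Rightarrow> nat \<Rightarrow> nat \<Rightarrow> nat \<Rightarrow> complex" where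
  "rho_c n c x = (\<lambda>i1 i2.
     if x \<in> Uc n c then (if i1 = x \<and> i2 = x then 1 else 0)
     else if x \<in> Vc n c then cw n c i1 x * cnj (cw n c i2 x)
     else 0)"

definition simplex :: "nat \<Rightarrow> (nat \<Rightarrow> real) set" where
  "simplex n = {t. (\<forall>k<n. 0 \<le> t k) \<and> (\<Sum>k<n. t k) = 1}"

definition c_t :: "nat \<Rightarrow> (nat \<Rightarrow> real) \<Rightarrow> nat \<Rightarrow> nat \<Rightarrow> complex" where
  "c_t n t i j = (\<Sum>k<n. if i \<in> Uset n \<and> j = flip_bit k i
                           then (-1) ^ par k i * complex_of_real (sqrt (t k)) else 0)"

definition rho_t :: "nat \<Rightarrow> (nat \<Rightarrow> real) \<Rightarrow> nat \<Rightarrow> nat \<Rightarrow> nat \<Rightarrow> complex" where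
  "rho_t n t x = (\<lambda>i1 i2.
     if x \<in> Uset n then (if i1 = x \<and> i2 = x then 1 else 0)
     else if x \<in> Vset n then c_t n t i1 x * cnj (c_t n t i2 x)
     else 0)"

text \<open>Unitary equivalence of two representations of C*(Q_n), given by their values
  on the generators p_x (x < 2^n), into M_A and M_B: a unitary W : C^A -> C^B
  (matrix indexed by B x A) with W rho1(p_x) = rho2(p_x) W for all x.
  Since the p_x generate C*(Q_n), this is unitary equivalence of representations.\<close>
definition unitarily_equiv ::
  "nat \<Rightarrow> nat set \<Rightarrow> (nat \<Rightarrow> nat \<Rightarrow> nat \<Rightarrow> complex) \<Rightarrow> nat set \<Rightarrow> (nat \<Rightarrow> nat \<Rightarrow> nat \<Rightarrow> complex) \<Rightarrow> bool" where
  "unitarily_equiv n A r1 B r2 \<longleftrightarrow>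
     (\<exists>W :: nat \<Rightarrow> nat \<Rightarrow> complex.
        (\<forall>a1\<in>A. \<forall>a2\<in>A. (\<Sum>b\<in>B. cnj (W b a1) * W b a2) = (if a1 = a2 then 1 else 0)) \<and>
        (\<forall>b1\<in>B. \<forall>b2\<in>B. (\<Sum>a\<in>A. W b1 a * cnj (W b2 a)) = (if b1 = b2 then 1 else 0)) \<and>
        (\<forall>x<2^n. \<forall>b\<in>B. \<forall>a\<in>A.
            (\<Sum>a'\<in>A. W b a' * r1 x a' a) = (\<Sum>b'\<in>B. r2 x b b' * W b' a)))"

end

theory Submission
  imports Defs
begin

text \<open>
  Around a square i, i # k, i' = i # k # l, i # l of Q_n the two vertices of U_n have exactly
  the other two corners as common neighbours, so admissibility says that the 2 x 2 matrix of
  weights on the square has orthogonal rows and orthogonal columns. With all weights nonzero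
  this forces |c| to agree on opposite edges of every square; hence |c(ij)|^2 = t_k depends only
  on the direction k of the edge, and the normalisation at the vertex 0 puts t in the simplex.
  It also forces c(i, i # k) c(i', i # l) t_l = - c(i, i # l) c(i', i # k) t_k, which c_t
  satisfies as well because its sign (-1)^par changes an odd number of times around a square.
  So the unimodular phases c / c_t form a flat connection on Q_n. Integrating it along monotone
  paths from 0 gives a unimodular potential P with c(ij) = conj(P i) P j c_t(ij), and the
  diagonal unitary P intertwines rho_c with rho_t.
\<close>

section \<open>The hypercube\<close>

lemma flip_bit_flip_bit_same [simp]: "flip_bit k (flip_bit k x) = (x :: nat)"
  by (rule bit_eqI) (auto simp: bit_flip_bit_iff)

lemma flip_bit_commute: "flip_bit k (flip_bit l x) = flip_bit l (flip_bit k (x :: nat))"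
  by (rule bit_eqI) (auto simp: bit_flip_bit_iff)

lemma flip_bit_flip_bit_cancel [simp]:
  "flip_bit l (flip_bit k (flip_bit l x)) = flip_bit k (x :: nat)"
  by (metis flip_bit_commute flip_bit_flip_bit_same)

lemma flip_bit_eq_flip_bit_iff: "flip_bit k x = flip_bit l (x :: nat) \<longleftrightarrow> k = l"
proof
  assume "flip_bit k x = flip_bit l x"
  then have "bit (flip_bit k x) k = bit (flip_bit l x) k"
    by simp
  then show "k = l"
    by (auto simp: bit_flip_bit_iff)
qed simp

lemma flip_bit_flip_bit_neq: "k \<noteq> l \<Longrightarrow> flip_bit k (flip_bit l x) \<noteq> (x :: nat)"
  by (metis flip_bit_flip_bit_same flip_bit_eq_flip_bit_iff)

lemma flip_bit_twice_eq_iff: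
  assumes "k \<noteq> l"
  shows "flip_bit a (flip_bit b x) = flip_bit k (flip_bit l (x :: nat)) \<longleftrightarrow>
    (a = k \<and> b = l) \<or> (a = l \<and> b = k)"
proof
  assume eq: "flip_bit a (flip_bit b x) = flip_bit k (flip_bit l x)"
  have "bit x p \<noteq> bit (flip_bit a (flip_bit b x)) p \<longleftrightarrow> (p = a) \<noteq> (p = b)" for p
    by (auto simp: bit_flip_bit_iff)
  moreover have "bit x p \<noteq> bit (flip_bit k (flip_bit l x)) p \<longleftrightarrow> (p = k) \<noteq> (p = l)" for p
    by (auto simp: bit_flip_bit_iff)
  ultimately have "(p = a) \<noteq> (p = b) \<longleftrightarrow> (p = k) \<noteq> (p = l)" for p
    by (simp add: eq)
  then show "(a = k \<and> b = l) \<or> (a = l \<and> b = k)"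
    using assms by metis
qed (auto simp: flip_bit_commute)

lemma flip_bit_less_power:
  assumes "x < 2 ^ n" "k < n"
  shows "flip_bit k x < (2 :: nat) ^ n"
proof -
  have "take_bit n (flip_bit k x) = flip_bit k x"
    using assms by (simp add: take_bit_flip_bit_eq take_bit_nat_eq_self)
  then show ?thesis
    by (metis take_bit_nat_less_exp)
qed

lemma take_bit_Suc_eq_flip_bit:
  "take_bit (Suc m) x = (if bit x m then flip_bit m (take_bit m x) else take_bit m (x :: nat))"
  by (rule bit_eqI) (auto simp: bit_take_bit_iff bit_flip_bit_iff less_Suc_eq)

lemma flip_bit_invariant_imp_const:
  fixes f :: "nat \<Rightarrow> 'a"
  assumes invariant: "\<And>x l. x < 2 ^ n \<Longrightarrow> l < n \<Longrightarrow> f (flip_bit l x) = f x"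
    and "x < 2 ^ n"
  shows "f x = f 0"
proof -
  have "f (take_bit m x) = f 0" if "m \<le> n" for m
    using that
  proof (induction m)
    case (Suc m)
    have "take_bit m x < 2 ^ n"
      using \<open>x < 2 ^ n\<close> take_bit_nat_less_eq_self le_less_trans by blast
    with Suc invariant[of "take_bit m x" m] show ?case
      by (simp add: take_bit_Suc_eq_flip_bit)
  qed simp
  from this[of n] \<open>x < 2 ^ n\<close> show ?thesis
    by (simp add: take_bit_nat_eq_self)
qed

lemma par_cases: "par m x = 0 \<or> par m x = 1"
  unfolding par_def by presburger

lemma par_flip_bit_le:
  assumes "k \<le> m"
  shows "par m (flip_bit k x) = 1 - par m x"
proof -
  let ?b = "\<lambda>y r. (if bit y r then 1 else 0) :: nat"
  have split: "(\<Sum>r\<le>m. ?b y r) = ?b y k + (\<Sum>r\<in>{..m}-{k}. ?b y r)"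
    for y :: nat using assms by (subst sum.remove[of _ k]) auto
  have "(\<Sum>r\<in>{..m}-{k}. ?b (flip_bit k x) r) = (\<Sum>r\<in>{..m}-{k}. ?b x r)"
    by (rule sum.cong) (auto simp: bit_flip_bit_iff)
  moreover have "?b (flip_bit k x) k + ?b x k = 1"
    by (auto simp: bit_flip_bit_iff)
  ultimately have "(\<Sum>r\<le>m. ?b (flip_bit k x) r) + (\<Sum>r\<le>m. ?b x r)
      = 1 + 2 * (\<Sum>r\<in>{..m}-{k}. ?b x r)"
    using split[of x] split[of "flip_bit k x"] by simp
  moreover have "(a :: nat) + b = 1 + 2 * c \<Longrightarrow> a mod 2 = 1 - b mod 2" for a b c
    by presburger
  ultimately show ?thesis
    unfolding par_def by blast
qed

lemma par_flip_bit_gt: "m < k \<Longrightarrow> par m (flip_bit k x) = par m x"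
  unfolding par_def
  by (intro arg_cong[where f = "\<lambda>s. s mod 2"] sum.cong) (auto simp: bit_flip_bit_iff)

lemma odd_par_square:
  fixes x :: nat
  assumes "k \<noteq> l"
  defines "x' \<equiv> flip_bit k (flip_bit l x)"
  shows "odd ((par k x + par k x') + (par l x + par l x'))"
proof (cases "k < l")
  case True
  then have "par k x' = 1 - par k x" "par l x' = par l x"
    using par_cases[of l x] by (auto simp: x'_def par_flip_bit_le par_flip_bit_gt)
  then show ?thesis
    using par_cases[of k x] par_cases[of l x] by auto
next
  case False
  then have "par k x' = par k x" "par l x' = 1 - par l x"
    using assms(1) par_cases[of k x]
    by (auto simp: x'_def par_flip_bit_le par_flip_bit_gt flip_bit_commute[of k l])
  then show ?thesis
    using par_cases[of k x] par_cases[of l x] by auto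
qed

lemma flip_bit_Uset: "x \<in> Uset n \<Longrightarrow> k < n \<Longrightarrow> flip_bit k x \<in> Vset n"
  and flip_bit_Vset: "x \<in> Vset n \<Longrightarrow> k < n \<Longrightarrow> flip_bit k x \<in> Uset n"
  unfolding Uset_def Vset_def by (auto simp: flip_bit_less_power par_flip_bit_le)

lemma Uset_Vset_disjoint: "x \<in> Uset n \<Longrightarrow> x \<notin> Vset n"
  unfolding Uset_def Vset_def by auto

lemma less_power_imp_Uset_or_Vset: "x < 2 ^ n \<Longrightarrow> x \<in> Uset n \<or> x \<in> Vset n"
  unfolding Uset_def Vset_def using par_cases by auto

lemma Uset_less_power: "x \<in> Uset n \<Longrightarrow> x < 2 ^ n"
  by (simp add: Uset_def)

lemma zero_in_Uset: "0 \<in> Uset n"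
  by (simp add: Uset_def par_def)

lemma finite_Uset: "finite (Uset n)"
  by (rule finite_subset[of _ "{..<2 ^ n}"]) (auto simp: Uset_def)

lemma edge_iff: "edge n i j \<longleftrightarrow> i \<in> Uset n \<and> (\<exists>k<n. j = flip_bit k i)"
  unfolding edge_def using flip_bit_Uset by blast

lemma edge_flip_bit: "i \<in> Uset n \<Longrightarrow> k < n \<Longrightarrow> edge n i (flip_bit k i)"
  by (auto simp: edge_iff)

lemma nbrs_eq_image:
  assumes "x < 2 ^ n"
  shows "nbrs n x = (\<lambda>k. flip_bit k x) ` {..<n}"
proof (cases "x \<in> Uset n")
  case True
  then have "\<not> edge n y x" for y
    by (auto simp: edge_def dest: Uset_Vset_disjoint)
  with True show ?thesis
    by (auto simp: nbrs_def edge_iff)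
next
  case False
  then have "x \<in> Vset n"
    using less_power_imp_Uset_or_Vset assms by blast
  then have "\<not> edge n x y" for y
    by (auto simp: edge_def dest: Uset_Vset_disjoint)
  moreover have "edge n y x \<longleftrightarrow> (\<exists>k<n. y = flip_bit k x)" for y
    using \<open>x \<in> Vset n\<close> by (auto simp: edge_iff flip_bit_Vset)
  ultimately show ?thesis
    by (auto simp: nbrs_def)
qed

lemma nbrs_inter_opposite_corner:
  assumes "x < 2 ^ n" "k < n" "l < n" "k \<noteq> l"
  shows "nbrs n x \<inter> nbrs n (flip_bit k (flip_bit l x)) = {flip_bit k x, flip_bit l x}"
proof -
  define x' where "x' = flip_bit k (flip_bit l x)"
  have "x' < 2 ^ n"
    using assms by (simp add: x'_def flip_bit_less_power)
  have "w \<in> {flip_bit k x, flip_bit l x}" if w: "w \<in> nbrs n x" "w \<in> nbrs n x'" for w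
  proof -
    obtain a b where "w = flip_bit a x" "w = flip_bit b x'"
      using w unfolding nbrs_eq_image[OF assms(1)] nbrs_eq_image[OF \<open>x' < 2 ^ n\<close>] by blast
    then have "flip_bit b (flip_bit a x) = flip_bit k (flip_bit l x)"
      by (metis flip_bit_flip_bit_same x'_def)
    then show ?thesis
      using flip_bit_twice_eq_iff[OF \<open>k \<noteq> l\<close>] \<open>w = flip_bit a x\<close> by auto
  qed
  moreover have "flip_bit l x' = flip_bit k x" "flip_bit k x' = flip_bit l x"
    by (simp_all add: x'_def)
  then have "flip_bit k x \<in> nbrs n x'" "flip_bit l x \<in> nbrs n x'"
    unfolding nbrs_eq_image[OF \<open>x' < 2 ^ n\<close>] using assms(2,3) by force+
  moreover have "flip_bit k x \<in> nbrs n x" "flip_bit l x \<in> nbrs n x"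
    using assms by (simp_all add: nbrs_eq_image)
  ultimately show ?thesis
    unfolding x'_def[symmetric] by blast
qed

section \<open>Relations around a square\<close>

lemma orthogonal_rows_and_columns_2x2:
  fixes a b d e :: complex
  assumes nonzero: "a \<noteq> 0" "b \<noteq> 0" "d \<noteq> 0" "e \<noteq> 0"
    and rows: "a * cnj d + b * cnj e = 0" and columns: "a * cnj b + d * cnj e = 0"
  shows "cmod a = cmod e" and "a * e * (cmod b)\<^sup>2 = - (b * d * (cmod e)\<^sup>2)"
proof -
  have rows': "cmod a * cmod d = cmod b * cmod e"
    using arg_cong[OF rows[unfolded add_eq_0_iff2], of cmod] by (simp add: norm_mult)
  have columns': "cmod a * cmod b = cmod d * cmod e"
    using arg_cong[OF columns[unfolded add_eq_0_iff2], of cmod] by (simp add: norm_mult)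
  have "(cmod a)\<^sup>2 * (cmod b * cmod d) = (cmod a * cmod d) * (cmod a * cmod b)"
    by (simp add: power2_eq_square)
  also have "\<dots> = (cmod e)\<^sup>2 * (cmod b * cmod d)"
    unfolding rows' columns' by (simp add: power2_eq_square)
  finally have "(cmod a)\<^sup>2 * (cmod b * cmod d) = (cmod e)\<^sup>2 * (cmod b * cmod d)" .
  then show "cmod a = cmod e"
    using nonzero by simp
  have "a * cnj b * (b * e) = - (d * cnj e) * (b * e)"
    using columns by (simp add: add_eq_0_iff2)
  then have "a * e * (b * cnj b) = - (b * d * (e * cnj e))"
    by (simp add: algebra_simps)
  then show "a * e * (cmod b)\<^sup>2 = - (b * d * (cmod e)\<^sup>2)"
    by (simp only: complex_norm_square)
qed

lemma ratio_of_square_relations: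
  fixes a b d e a' b' d' e' S T :: "'a :: field"
  assumes "a * e * T = - (b * d * S)" "a' * e' * T = - (b' * d' * S)"
    and "a' \<noteq> 0" "b' \<noteq> 0" "d' \<noteq> 0" "e' \<noteq> 0" "T \<noteq> 0"
  shows "a / a' * (e / e') = b / b' * (d / d')"
proof -
  have "a * e * (b' * d') * T = (a * e * T) * (b' * d')"
    by (simp only: ac_simps)
  also have "\<dots> = (a' * e' * T) * (b * d)"
    unfolding assms(1,2) by (simp add: algebra_simps)
  also have "\<dots> = b * d * (a' * e') * T"
    by (simp only: ac_simps)
  finally have "a * e * (b' * d') = b * d * (a' * e')"
    using \<open>T \<noteq> 0\<close> by simp
  then show ?thesis
    using assms(3-6) by (simp add: field_simps)
qed

lemma c_t_flip_bit:
  assumes "i \<in> Uset n" "k < n"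
  shows "c_t n t i (flip_bit k i) = (-1) ^ par k i * complex_of_real (sqrt (t k))"
  using assms by (simp add: c_t_def flip_bit_eq_flip_bit_iff)

lemma c_t_eq_0: "\<not> (\<exists>k<n. j = flip_bit k i) \<Longrightarrow> c_t n t i j = 0"
  unfolding c_t_def by (intro sum.neutral) auto

lemma c_t_square_relation:
  fixes t :: "nat \<Rightarrow> real"
  assumes u: "u \<in> Uset n" and kl: "k < n" "l < n" "k \<noteq> l" and t: "t k \<ge> 0" "t l \<ge> 0"
  shows "c_t n t u (flip_bit k u) * c_t n t (flip_bit k (flip_bit l u)) (flip_bit l u) * t l
    = - (c_t n t u (flip_bit l u) * c_t n t (flip_bit k (flip_bit l u)) (flip_bit k u) * t k)"
proof -
  define u' where "u' = flip_bit k (flip_bit l u)"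
  have u': "u' \<in> Uset n"
    using u kl by (simp add: u'_def flip_bit_Uset flip_bit_Vset)
  have "c_t n t u' (flip_bit l u) = (-1) ^ par k u' * sqrt (t k)"
    "c_t n t u' (flip_bit k u) = (-1) ^ par l u' * sqrt (t l)"
    using c_t_flip_bit[OF u' kl(1)] c_t_flip_bit[OF u' kl(2)] by (simp_all add: u'_def)
  moreover have "complex_of_real (sqrt x) * complex_of_real (sqrt x) = x" if "x \<ge> 0" for x
    using that by (simp flip: of_real_mult)
  ultimately have k_edges: "c_t n t u (flip_bit k u) * c_t n t u' (flip_bit l u)
      = (-1::complex) ^ (par k u + par k u') * t k"
    and l_edges: "c_t n t u (flip_bit l u) * c_t n t u' (flip_bit k u)
      = (-1::complex) ^ (par l u + par l u') * t l"
    using u kl t by (simp_all add: c_t_flip_bit power_add mult_ac)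
  have neg_one_power: "(-1::complex) ^ a = - ((-1) ^ b)" if "odd (a + b)" for a b :: nat
    using that by (cases "even a") auto
  have "c_t n t u (flip_bit k u) * c_t n t u' (flip_bit l u) * t l
      = (-1::complex) ^ (par k u + par k u') * t k * t l"
    by (simp only: k_edges)
  also have "\<dots> = - ((-1::complex) ^ (par l u + par l u') * t l * t k)"
    using neg_one_power[OF odd_par_square[OF kl(3), of u, folded u'_def]] by simp
  also have "\<dots> = - (c_t n t u (flip_bit l u) * c_t n t u' (flip_bit k u) * t k)"
    by (simp only: l_edges)
  finally show ?thesis
    by (simp only: u'_def)
qed

section \<open>Potentials of flat connections on the hypercube\<close>

definition flat_connection :: "nat \<Rightarrow> (nat \<Rightarrow> nat \<Rightarrow> 'a :: comm_monoid_mult) \<Rightarrow> bool" where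
  "flat_connection n g \<longleftrightarrow>
    (\<forall>y < 2 ^ n. \<forall>k < n. g y (flip_bit k y) * g (flip_bit k y) y = 1) \<and>
    (\<forall>y < 2 ^ n. \<forall>k < n. \<forall>l < n. k \<noteq> l \<longrightarrow>
      g y (flip_bit k y) * g (flip_bit k y) (flip_bit l (flip_bit k y))
      = g y (flip_bit l y) * g (flip_bit l y) (flip_bit k (flip_bit l y)))"

lemma flat_connectionD:
  assumes "flat_connection n g" "y < 2 ^ n" "k < n"
  shows "g y (flip_bit k y) * g (flip_bit k y) y = 1"
    and "l < n \<Longrightarrow> k \<noteq> l \<Longrightarrow>
      g y (flip_bit k y) * g (flip_bit k y) (flip_bit l (flip_bit k y))
      = g y (flip_bit l y) * g (flip_bit l y) (flip_bit k (flip_bit l y))"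
  using assms by (auto simp: flat_connection_def)

text \<open>The product of g along the monotone path from 0 to take_bit m x that flips the set bits
  of x from the lowest one up.\<close>

primrec path_prod :: "(nat \<Rightarrow> nat \<Rightarrow> 'a :: comm_monoid_mult) \<Rightarrow> nat \<Rightarrow> nat \<Rightarrow> 'a" where
  "path_prod g 0 x = 1"
| "path_prod g (Suc m) x = path_prod g m x *
    (if bit x m then g (take_bit m x) (flip_bit m (take_bit m x)) else 1)"

lemma path_prod_0: "path_prod g m 0 = 1"
  by (induction m) simp_all

lemma path_prod_flip_bit_high: "m \<le> k \<Longrightarrow> path_prod g m (flip_bit k x) = path_prod g m x"
  by (induction m) (simp_all add: bit_flip_bit_iff take_bit_flip_bit_eq)

lemma path_prod_flip_bit_take_bit:
  assumes g: "flat_connection n g" and "m \<le> n" "k < m"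
  shows "path_prod g m (flip_bit k x)
    = path_prod g m x * g (take_bit m x) (flip_bit k (take_bit m x))"
  using assms(2,3)
proof (induction m arbitrary: k)
  case (Suc m)
  define y where "y = take_bit m x"
  have "m < n"
    using Suc.prems by simp
  have "y < 2 ^ n"
    using take_bit_nat_less_exp[of m x] power_strict_increasing[OF \<open>m < n\<close>, of "2::nat"]
    unfolding y_def by linarith
  have take_bit_Suc: "take_bit (Suc m) x = (if bit x m then flip_bit m y else y)"
    by (simp add: y_def take_bit_Suc_eq_flip_bit)
  show ?case
  proof (cases "k = m")
    case True
    have "path_prod g m (flip_bit m x) = path_prod g m x"
      by (simp add: path_prod_flip_bit_high)
    then show ?thesis
      using True flat_connectionD(1)[OF g \<open>y < 2 ^ n\<close> \<open>m < n\<close>]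
      by (simp add: take_bit_Suc y_def[symmetric] bit_flip_bit_iff take_bit_flip_bit_eq mult.assoc)
  next
    case False
    then have "k < m"
      using Suc.prems by simp
    then have IH: "path_prod g m (flip_bit k x) = path_prod g m x * g y (flip_bit k y)"
      using Suc by (simp add: y_def)
    have same_bit: "bit (flip_bit k x) m = bit x m" and "take_bit m (flip_bit k x) = flip_bit k y"
      using \<open>k < m\<close> by (simp_all add: bit_flip_bit_iff take_bit_flip_bit_eq y_def)
    show ?thesis
    proof (cases "bit x m")
      case True
      have "path_prod g (Suc m) (flip_bit k x)
          = path_prod g m x * (g y (flip_bit k y) * g (flip_bit k y) (flip_bit m (flip_bit k y)))"
        using IH True same_bit \<open>take_bit m (flip_bit k x) = flip_bit k y\<close> by (simp add: mult.assoc)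
      also have "\<dots> = path_prod g m x *
          (g y (flip_bit m y) * g (flip_bit m y) (flip_bit k (flip_bit m y)))"
        using flat_connectionD(2)[OF g \<open>y < 2 ^ n\<close> _ \<open>m < n\<close>, of k] \<open>k < m\<close> \<open>m < n\<close>
        by simp
      finally show ?thesis
        using True by (simp add: take_bit_Suc y_def[symmetric] mult.assoc)
    next
      case False
      then show ?thesis
        using IH same_bit by (simp add: take_bit_Suc y_def[symmetric])
    qed
  qed
qed simp

lemma path_prod_flip_bit:
  assumes "flat_connection n g" "x < 2 ^ n" "k < n"
  shows "path_prod g n (flip_bit k x) = path_prod g n x * g x (flip_bit k x)"
  using path_prod_flip_bit_take_bit[OF assms(1) order_refl assms(3)] assms(2)
  by (simp add: take_bit_nat_eq_self)

lemma unitarily_equiv_diagonal: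
  assumes "finite A" and unimodular: "\<And>a. a \<in> A \<Longrightarrow> cmod (P a) = 1"
    and intertwines: "\<And>x a b. x < 2 ^ n \<Longrightarrow> a \<in> A \<Longrightarrow> b \<in> A \<Longrightarrow> P b * r1 x b a = r2 x b a * P a"
  shows "unitarily_equiv n A r1 A r2"
  unfolding unitarily_equiv_def
proof (intro exI[of _ "\<lambda>b a. if b = a then P a else 0"] conjI ballI allI impI)
  have unit: "cnj (P a) * P a = 1" "P a * cnj (P a) = 1" if "a \<in> A" for a
    using unimodular[OF that] complex_norm_square[of "P a"] by (simp_all add: mult.commute)
  fix a1 a2 assume "a1 \<in> A" "a2 \<in> A"
  have sum_eq: "(\<lambda>b. cnj (if b = a1 then P a1 else 0) * (if b = a2 then P a2 else 0))
      = (\<lambda>b. if b = a1 then (if a1 = a2 then 1 else 0) else 0)"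
    "(\<lambda>b. (if a1 = b then P b else 0) * cnj (if a2 = b then P b else 0))
      = (\<lambda>b. if b = a1 then (if a1 = a2 then 1 else 0) else 0)"
    using unit \<open>a1 \<in> A\<close> by auto
  then show "(\<Sum>b\<in>A. cnj (if b = a1 then P a1 else 0) * (if b = a2 then P a2 else 0))
      = (if a1 = a2 then 1 else 0)"
    and "(\<Sum>b\<in>A. (if a1 = b then P b else 0) * cnj (if a2 = b then P b else 0))
      = (if a1 = a2 then 1 else 0)"
    unfolding sum_eq using \<open>finite A\<close> \<open>a1 \<in> A\<close> by simp_all
next
  fix x :: nat and b a assume "x < 2 ^ n" "b \<in> A" "a \<in> A"
  have sum_eq:
    "(\<lambda>a'. (if b = a' then P a' else 0) * r1 x a' a) = (\<lambda>a'. if a' = b then P b * r1 x b a else 0)"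
    "(\<lambda>b'. r2 x b b' * (if b' = a then P a else 0)) = (\<lambda>b'. if b' = a then r2 x b a * P a else 0)"
    by auto
  then show "(\<Sum>a'\<in>A. (if b = a' then P a' else 0) * r1 x a' a)
      = (\<Sum>b'\<in>A. r2 x b b' * (if b' = a then P a else 0))"
    unfolding sum_eq using \<open>finite A\<close> \<open>x < 2 ^ n\<close> \<open>b \<in> A\<close> \<open>a \<in> A\<close> intertwines by simp
qed

section \<open>Admissible weightings without zeros\<close>

locale nonvanishing_admissible_weighting =
  fixes n :: nat and c :: "nat \<Rightarrow> nat \<Rightarrow> complex"
  assumes n_pos: "n \<ge> 1" and adm: "admissible n c"
    and nonzero: "\<And>i j. edge n i j \<Longrightarrow> c i j \<noteq> 0"
begin

lemma Uc_eq: "Uc n c = Uset n"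
  using n_pos nonzero edge_flip_bit[of _ n 0] by (auto simp: Uc_def)

lemma Vc_eq: "Vc n c = Vset n"
proof -
  have "0 < n"
    using n_pos by simp
  have "edge n (flip_bit 0 j) j" if "j \<in> Vset n" for j
    using edge_flip_bit[OF flip_bit_Vset[OF that \<open>0 < n\<close>] \<open>0 < n\<close>] by simp
  then show ?thesis
    using nonzero by (auto simp: Vc_def)
qed

lemma cw_edge: "edge n i j \<Longrightarrow> cw n c i j = c i j"
  by (simp add: cw_def)

lemma square_orthogonality:
  assumes i: "i \<in> Uset n" and kl: "k < n" "l < n" "k \<noteq> l"
  defines "i' \<equiv> flip_bit k (flip_bit l i)"
  shows "c i (flip_bit k i) * cnj (c i' (flip_bit k i)) + c i (flip_bit l i) * cnj (c i' (flip_bit l i)) = 0"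
    and "c i (flip_bit k i) * cnj (c i (flip_bit l i)) + c i' (flip_bit k i) * cnj (c i' (flip_bit l i)) = 0"
proof -
  have i': "i' \<in> Uset n"
    using i kl by (simp add: i'_def flip_bit_Uset flip_bit_Vset)
  have edges: "edge n i (flip_bit k i)" "edge n i (flip_bit l i)"
    "edge n i' (flip_bit k i)" "edge n i' (flip_bit l i)"
    using edge_flip_bit[OF i kl(1)] edge_flip_bit[OF i kl(2)]
      edge_flip_bit[OF i' kl(2)] edge_flip_bit[OF i' kl(1)]
    by (simp_all add: i'_def flip_bit_commute[of l k])
  have distinct: "flip_bit k i \<noteq> flip_bit l i" "i \<noteq> i'"
    using flip_bit_flip_bit_neq[OF kl(3), of i] by (auto simp: i'_def flip_bit_eq_flip_bit_iff)
  have "(\<Sum>j\<in>nbrs n i \<inter> nbrs n i'. cw n c i j * cnj (cw n c i' j)) = 0"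
    using adm i i' distinct(2) unfolding admissible_def Uc_eq by auto
  moreover have "nbrs n i \<inter> nbrs n i' = {flip_bit k i, flip_bit l i}"
    using nbrs_inter_opposite_corner[OF Uset_less_power[OF i] kl] by (simp add: i'_def)
  ultimately show "c i (flip_bit k i) * cnj (c i' (flip_bit k i)) + c i (flip_bit l i) * cnj (c i' (flip_bit l i)) = 0"
    using distinct(1) edges by (simp add: cw_edge)
  have j: "flip_bit k i \<in> Vset n" "flip_bit l i \<in> Vset n"
    using i kl by (simp_all add: flip_bit_Uset)
  have "(\<Sum>x\<in>nbrs n (flip_bit k i) \<inter> nbrs n (flip_bit l i).
      cw n c x (flip_bit k i) * cnj (cw n c x (flip_bit l i))) = 0"
    using adm j distinct(1) unfolding admissible_def Vc_eq by auto
  moreover have "nbrs n (flip_bit k i) \<inter> nbrs n (flip_bit l i) = {i', i}"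
    using nbrs_inter_opposite_corner[OF flip_bit_less_power[OF Uset_less_power[OF i] kl(1)] kl(2,1)] kl(3)
    by (simp add: i'_def flip_bit_commute[of l k] insert_commute)
  ultimately show "c i (flip_bit k i) * cnj (c i (flip_bit l i)) + c i' (flip_bit k i) * cnj (c i' (flip_bit l i)) = 0"
    using distinct(2) edges by (simp add: cw_edge add.commute)
qed

lemma square_relations:
  assumes i: "i \<in> Uset n" and kl: "k < n" "l < n" "k \<noteq> l"
  defines "i' \<equiv> flip_bit k (flip_bit l i)"
  shows "cmod (c i (flip_bit k i)) = cmod (c i' (flip_bit l i))"
    and "c i (flip_bit k i) * c i' (flip_bit l i) * (cmod (c i (flip_bit l i)))\<^sup>2
      = - (c i (flip_bit l i) * c i' (flip_bit k i) * (cmod (c i' (flip_bit l i)))\<^sup>2)"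
proof -
  have i': "i' \<in> Uset n"
    using i kl by (simp add: i'_def flip_bit_Uset flip_bit_Vset)
  have "c i (flip_bit k i) \<noteq> 0" "c i (flip_bit l i) \<noteq> 0"
    "c i' (flip_bit k i) \<noteq> 0" "c i' (flip_bit l i) \<noteq> 0"
    using nonzero edge_flip_bit[OF i kl(1)] edge_flip_bit[OF i kl(2)]
      edge_flip_bit[OF i' kl(2)] edge_flip_bit[OF i' kl(1)]
    by (simp_all add: i'_def flip_bit_commute[of l k])
  from orthogonal_rows_and_columns_2x2[OF this square_orthogonality[OF assms(1-4), folded i'_def]]
  show "cmod (c i (flip_bit k i)) = cmod (c i' (flip_bit l i))"
    and "c i (flip_bit k i) * c i' (flip_bit l i) * (cmod (c i (flip_bit l i)))\<^sup>2
      = - (c i (flip_bit l i) * c i' (flip_bit k i) * (cmod (c i' (flip_bit l i)))\<^sup>2)"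
    by simp_all
qed

text \<open>Defined on V_n too, so that its invariance can be propagated by single flips.\<close>

definition edge_norm :: "nat \<Rightarrow> nat \<Rightarrow> real" where
  "edge_norm x k = (if x \<in> Uset n then cmod (c x (flip_bit k x)) else cmod (c (flip_bit k x) x))"

lemma edge_norm_flip_bit:
  assumes x: "x < 2 ^ n" and kl: "k < n" "l < n"
  shows "edge_norm (flip_bit l x) k = edge_norm x k"
proof (cases "l = k")
  case True
  then show ?thesis
    using less_power_imp_Uset_or_Vset[OF x] kl
    by (auto simp: edge_norm_def dest: flip_bit_Uset flip_bit_Vset Uset_Vset_disjoint)
next
  case False
  show ?thesis
  proof (cases "x \<in> Uset n")
    case True
    then have "flip_bit l x \<notin> Uset n"
      using kl by (auto dest: flip_bit_Uset Uset_Vset_disjoint)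
    then show ?thesis
      using True square_relations(1)[OF True kl(1,2)] \<open>l \<noteq> k\<close>
      by (simp add: edge_norm_def)
  next
    case False
    then have x': "flip_bit l x \<in> Uset n"
      using less_power_imp_Uset_or_Vset[OF x] kl by (auto dest: flip_bit_Vset)
    then show ?thesis
      using False square_relations(1)[OF x' kl(1,2)] \<open>l \<noteq> k\<close>
      by (simp add: edge_norm_def)
  qed
qed

definition t :: "nat \<Rightarrow> real" where
  "t k = (edge_norm 0 k)\<^sup>2"

lemma norm_c_flip_bit:
  assumes "i \<in> Uset n" "k < n"
  shows "cmod (c i (flip_bit k i)) = sqrt (t k)"
proof -
  have "edge_norm i k = edge_norm 0 k"
    using flip_bit_invariant_imp_const[of n "\<lambda>x. edge_norm x k"] edge_norm_flip_bit
      Uset_less_power assms by blast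
  then show ?thesis
    using assms(1) by (simp add: t_def edge_norm_def zero_in_Uset)
qed

lemma t_nonneg: "t k \<ge> 0"
  by (simp add: t_def)

lemma t_pos:
  assumes "k < n"
  shows "t k > 0"
  using nonzero[OF edge_flip_bit[OF zero_in_Uset assms]]
  by (simp add: t_def edge_norm_def zero_in_Uset)

lemma t_in_simplex: "t \<in> simplex n"
proof -
  have "(\<Sum>j\<in>nbrs n 0. cw n c 0 j * cnj (cw n c 0 j)) = 1"
    using adm zero_in_Uset unfolding admissible_def Uc_eq by fastforce
  moreover have "nbrs n 0 = (\<lambda>k. flip_bit k 0) ` {..<n}"
    by (simp add: nbrs_eq_image)
  moreover have "inj_on (\<lambda>k. flip_bit k (0 :: nat)) {..<n}"
    by (simp add: inj_on_def flip_bit_eq_flip_bit_iff)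
  moreover have "cw n c 0 (flip_bit k 0) * cnj (cw n c 0 (flip_bit k 0)) = t k" if "k < n" for k
    using edge_flip_bit[OF zero_in_Uset that] norm_c_flip_bit[OF zero_in_Uset that] t_nonneg
    by (simp add: cw_edge complex_norm_square[symmetric])
  ultimately have "(\<Sum>k<n. complex_of_real (t k)) = 1"
    by (simp add: sum.reindex)
  then have "(\<Sum>k<n. t k) = 1"
    by (metis of_real_eq_1_iff of_real_sum)
  then show ?thesis
    using t_pos by (auto simp: simplex_def less_imp_le)
qed

lemma c_square_relation:
  assumes u: "u \<in> Uset n" and kl: "k < n" "l < n" "k \<noteq> l"
  defines "u' \<equiv> flip_bit k (flip_bit l u)"
  shows "c u (flip_bit k u) * c u' (flip_bit l u) * t l
    = - (c u (flip_bit l u) * c u' (flip_bit k u) * t k)"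
proof -
  have "cmod (c u (flip_bit l u)) = sqrt (t l)" "cmod (c u' (flip_bit l u)) = sqrt (t k)"
    using norm_c_flip_bit[OF u kl(2)] norm_c_flip_bit[OF u kl(1)] square_relations(1)[OF u kl]
    by (simp_all add: u'_def)
  then have "(cmod (c u (flip_bit l u)))\<^sup>2 = t l" "(cmod (c u' (flip_bit l u)))\<^sup>2 = t k"
    using t_nonneg by simp_all
  then show ?thesis
    using square_relations(2)[OF u kl] by (simp add: u'_def)
qed

lemma c_t_flip_bit_nonzero:
  assumes "i \<in> Uset n" "k < n"
  shows "c_t n t i (flip_bit k i) \<noteq> 0"
  using c_t_flip_bit[OF assms] t_pos[OF assms(2)] by simp

definition phase :: "nat \<Rightarrow> nat \<Rightarrow> complex" where
  "phase i j = c i j / c_t n t i j"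

lemma norm_phase:
  assumes "i \<in> Uset n" "k < n"
  shows "cmod (phase i (flip_bit k i)) = 1"
  using norm_c_flip_bit[OF assms] c_t_flip_bit[OF assms] t_pos[OF assms(2)]
  by (simp add: phase_def norm_divide norm_mult norm_power)

lemma phase_square:
  assumes u: "u \<in> Uset n" and kl: "k < n" "l < n" "k \<noteq> l"
  defines "u' \<equiv> flip_bit k (flip_bit l u)"
  shows "phase u (flip_bit k u) * phase u' (flip_bit l u)
    = phase u (flip_bit l u) * phase u' (flip_bit k u)"
proof -
  have u': "u' \<in> Uset n"
    using u kl by (simp add: u'_def flip_bit_Uset flip_bit_Vset)
  have "c_t n t u' (flip_bit k u) \<noteq> 0" "c_t n t u' (flip_bit l u) \<noteq> 0"
    using c_t_flip_bit_nonzero[OF u' kl(2)] c_t_flip_bit_nonzero[OF u' kl(1)]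
    by (simp_all add: u'_def)
  with t_pos[OF kl(2)] show ?thesis
    unfolding phase_def u'_def
    by (intro ratio_of_square_relations[OF c_square_relation[OF u kl]
          c_t_square_relation[OF u kl t_nonneg t_nonneg]
          c_t_flip_bit_nonzero[OF u kl(1)] c_t_flip_bit_nonzero[OF u kl(2)]]) auto
qed

definition connection :: "nat \<Rightarrow> nat \<Rightarrow> complex" where
  "connection x y = (if x \<in> Uset n then phase x y else inverse (phase y x))"

lemma phase_nonzero: "i \<in> Uset n \<Longrightarrow> k < n \<Longrightarrow> phase i (flip_bit k i) \<noteq> 0"
  using norm_phase by fastforce

lemma norm_connection:
  assumes "x < 2 ^ n" "k < n"
  shows "cmod (connection x (flip_bit k x)) = 1"
  using less_power_imp_Uset_or_Vset[OF assms(1)] assms(2)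
  by (auto simp: connection_def norm_inverse norm_phase flip_bit_Vset
      dest: norm_phase[OF flip_bit_Vset] Uset_Vset_disjoint)

lemma connection_inverse:
  assumes "x < 2 ^ n" "k < n"
  shows "connection x (flip_bit k x) * connection (flip_bit k x) x = 1"
  using less_power_imp_Uset_or_Vset[OF assms(1)] assms(2)
  by (auto simp: connection_def phase_nonzero flip_bit_Vset
      dest: phase_nonzero[OF flip_bit_Vset] flip_bit_Uset Uset_Vset_disjoint)

lemma connection_flat:
  assumes x: "x < 2 ^ n" and kl: "k < n" "l < n" "k \<noteq> l"
  shows "connection x (flip_bit k x) * connection (flip_bit k x) (flip_bit l (flip_bit k x))
    = connection x (flip_bit l x) * connection (flip_bit l x) (flip_bit k (flip_bit l x))"
proof (cases "x \<in> Uset n")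
  case True
  define x' where "x' = flip_bit k (flip_bit l x)"
  have x': "x' \<in> Uset n"
    using True kl by (simp add: x'_def flip_bit_Uset flip_bit_Vset)
  have "flip_bit k x \<notin> Uset n" "flip_bit l x \<notin> Uset n"
    using True kl by (auto dest: flip_bit_Uset Uset_Vset_disjoint)
  moreover have "phase x' (flip_bit k x) \<noteq> 0" "phase x' (flip_bit l x) \<noteq> 0"
    using phase_nonzero[OF x' kl(2)] phase_nonzero[OF x' kl(1)] by (simp_all add: x'_def)
  ultimately show ?thesis
    using True phase_square[OF True kl, folded x'_def]
    by (simp add: connection_def x'_def flip_bit_commute[of l k] field_simps)
next
  case False
  then have "x \<in> Vset n"
    using less_power_imp_Uset_or_Vset[OF x] by simp
  define u where "u = flip_bit k x"
  have u: "u \<in> Uset n" "flip_bit k (flip_bit l u) = flip_bit l x" "flip_bit k u = x"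
    using flip_bit_Vset[OF \<open>x \<in> Vset n\<close> kl(1)] by (simp_all add: u_def flip_bit_commute[of k l])
  have "flip_bit l x \<in> Uset n"
    using flip_bit_Vset[OF \<open>x \<in> Vset n\<close> kl(2)] .
  moreover have "phase u (flip_bit k u) \<noteq> 0" "phase (flip_bit l x) x \<noteq> 0"
    using phase_nonzero[OF u(1) kl(1)] phase_nonzero[OF \<open>flip_bit l x \<in> Uset n\<close> kl(2)]
    by simp_all
  ultimately show ?thesis
    using False phase_square[OF u(1) kl] u
    by (simp add: connection_def u_def flip_bit_commute[of l k] field_simps)
qed

lemma flat_connection_connection: "flat_connection n connection"
  using connection_inverse connection_flat by (auto simp: flat_connection_def)

definition potential :: "nat \<Rightarrow> complex" where
  "potential = path_prod connection n"

lemma potential_flip_bit: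
  "x < 2 ^ n \<Longrightarrow> k < n \<Longrightarrow> potential (flip_bit k x) = potential x * connection x (flip_bit k x)"
  unfolding potential_def by (rule path_prod_flip_bit[OF flat_connection_connection])

lemma norm_potential:
  assumes "x < 2 ^ n"
  shows "cmod (potential x) = 1"
proof -
  have "cmod (potential (flip_bit l y)) = cmod (potential y)" if "y < 2 ^ n" "l < n" for y l
    using that by (simp add: potential_flip_bit norm_mult norm_connection)
  then have "cmod (potential x) = cmod (potential 0)"
    by (rule flip_bit_invariant_imp_const[OF _ assms])
  then show ?thesis
    by (simp add: potential_def path_prod_0)
qed

lemma cw_eq_gauge_transform:
  assumes i: "i \<in> Uset n" and j: "j \<in> Vset n"
  shows "cw n c i j = cnj (potential i) * potential j * c_t n t i j"
proof (cases "\<exists>k<n. j = flip_bit k i")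
  case True
  then obtain k where k: "k < n" "j = flip_bit k i"
    by blast
  have "cnj (potential i) * potential i = 1"
    using norm_potential[OF Uset_less_power[OF i]] complex_norm_square[of "potential i"]
    by (simp add: mult.commute)
  then have "cnj (potential i) * potential j = phase i j"
    using potential_flip_bit[OF Uset_less_power[OF i] k(1)] i k(2)
    by (simp add: connection_def mult.assoc[symmetric])
  then show ?thesis
    using c_t_flip_bit_nonzero[OF i k(1)] edge_flip_bit[OF i k(1)] k(2)
    by (simp add: phase_def cw_edge)
next
  case False
  then show ?thesis
    by (auto simp: cw_def edge_iff c_t_eq_0)
qed

lemma potential_intertwines:
  assumes "x < 2 ^ n" "a \<in> Uset n" "b \<in> Uset n"
  shows "potential b * rho_c n c x b a = rho_t n t x b a * potential a"
proof (cases "x \<in> Uset n")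
  case True
  then show ?thesis
    by (auto simp: rho_c_def rho_t_def Uc_eq)
next
  case False
  then have "x \<in> Vset n"
    using less_power_imp_Uset_or_Vset assms(1) by blast
  have unit: "potential y * cnj (potential y) = 1" if "y < 2 ^ n" for y
    using norm_potential[OF that] complex_norm_square[of "potential y"] by simp
  have "potential b * rho_c n c x b a
      = potential b * (cnj (potential b) * potential x * c_t n t b x)
          * cnj (cnj (potential a) * potential x * c_t n t a x)"
    using False \<open>x \<in> Vset n\<close> assms(2,3)
    by (simp add: rho_c_def Uc_eq Vc_eq cw_eq_gauge_transform mult.assoc)
  also have "\<dots> = (potential b * cnj (potential b)) * (potential x * cnj (potential x))
      * (c_t n t b x * cnj (c_t n t a x)) * potential a"
    by (simp add: algebra_simps)
  also have "\<dots> = rho_t n t x b a * potential a"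
    using False \<open>x \<in> Vset n\<close> assms unit Uset_less_power by (simp add: rho_t_def)
  finally show ?thesis .
qed

end

theorem lemma5p2:
  fixes n :: nat and c :: "nat \<Rightarrow> nat \<Rightarrow> complex"
  assumes "n \<ge> 1"
    and "admissible n c"
    and "\<And>i j. edge n i j \<Longrightarrow> c i j \<noteq> 0"
  shows "\<exists>t\<in>simplex n. unitarily_equiv n (Uc n c) (rho_c n c) (Uset n) (rho_t n t)"
proof -
  interpret nonvanishing_admissible_weighting n c
    using assms by unfold_locales
  have "unitarily_equiv n (Uset n) (rho_c n c) (Uset n) (rho_t n t)"
    using finite_Uset norm_potential[OF Uset_less_power] potential_intertwines
    by (rule unitarily_equiv_diagonal)
  then show ?thesis
    using t_in_simplex by (auto simp: Uc_eq)
qed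

end
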